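(* Let $0<a<m<b<1$ and let $g:\mathbb R\to\mathbb R$ be given by $g(u)=0$ if $u<a$, $g(u)=1$ if $a\le u\le b$, and $g(u)=m$ if $u>b$. Let $k:\mathbb R\to\mathbb R$ be a piecewise differentiable function satisfying: (H1) $k(x)\ge 0$ for all $x$ and $\int_{-\infty}^{\infty}k(x)\,dx=1$; (H2) $k(x)=k(-x)$ for all $x$; (H3) $k(x)>0$ for all $x\in(-\sigma,\sigma)$ for some $0<\sigma\le\infty$; (H4) for all $\lambda\in(0,1)$ and all $A,B\in\mathbb R$ with $A>B$, the function $x\mapsto k(x-A)-\lambda k(x-B)$ has fewer than $2$ sign changes; (H5) for all $\lambda\in(0,1)$ and all $A,B\in\mathbb R$ with $A>B$, the function $x\mapsto k(x-r-A)-\lambda k(x-r-B)-k(x+r+A)+\lambda k(x+r+B)$ has fewer than $4$ sign changes for all sufficiently large $r>0$. Define the operator $Q[u](x)=\int_{-\infty}^{\infty}k(x-y)\,g(u(y))\,dy$ on bounded continuous functions $u:\mathbb R\to\mathbb R$. Let $w_1(x)=\int_x^\infty k(y)\,dy$, let $c^*=\tfrac12\sup\{x\in\mathbb R: Q[w_1](x)=a\}$, and let $w_2(x)=Q[w_1](x+c^* )$. Define $W_n(x)=w_1(x-nc^* )$ for $n\ge0$ even and $W_n(x)=w_2(x-nc^* )$ for $n\ge 0$ odd. If $\|w_2\|_\infty<b$, then $W_{n+1}=Q[W_n]$ for all $n\ge 0$.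
   Context: $\|\cdot\|_\infty$ denotes the supremum norm on bounded continuous real-valued functions on $\mathbb R$. *)

theory Defs
  imports "HOL-Analysis.Analysis"
begin

definition gfun :: "real \<Rightarrow> real \<Rightarrow> real \<Rightarrow> real \<Rightarrow> real" where
  "gfun a m b u = (if u < a then 0 else if u \<le> b then 1 else m)"

definition Qop :: "(real \<Rightarrow> real) \<Rightarrow> (real \<Rightarrow> real) \<Rightarrow> (real \<Rightarrow> real) \<Rightarrow> real \<Rightarrow> real" where
  "Qop k g u x = integral\<^sup>L lborel (\<lambda>y. k (x - y) * g (u y))"

definition sign_changes_ge :: "(real \<Rightarrow> real) \<Rightarrow> nat \<Rightarrow> bool" where
  "sign_changes_ge f n \<longleftrightarrow>
     (\<exists>xs. length xs = Suc n \<and> sorted_wrt (<) xs \<and>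
           (\<forall>i<n. f (xs ! i) * f (xs ! Suc i) < 0))"

definition fewer_sign_changes :: "(real \<Rightarrow> real) \<Rightarrow> nat \<Rightarrow> bool" where
  "fewer_sign_changes f n \<longleftrightarrow> \<not> sign_changes_ge f n"

definition piecewise_differentiable :: "(real \<Rightarrow> real) \<Rightarrow> bool" where
  "piecewise_differentiable k \<longleftrightarrow>
     (\<exists>S. finite S \<and> (\<forall>x. x \<notin> S \<longrightarrow> k differentiable (at x)))"

end

theory Submission
  imports Defs
begin

(* w1 is the upper tail of k, so g(w1) equals m left of some point B, 1 on [B, A] and 0 right
   of A, with B < A; hence Q[w1](x) = w1(x - A) - (1 - m) w1(x - B).  The decrease of Q[w1]
   over (x, y) is the integral of k(s - A) - (1 - m) k(s - B), which by (H4) changes sign at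
   most once.  Since Q[w1] runs from m at -oo down to 0 at +oo, it cannot dip below a before
   its last crossing of a, so a <= Q[w1](x) exactly when x <= 2 c^*.  If moreover w2 < b,
   then g(w2) is the indicator of (-oo, c^*], whence Q[w2] is w1 translated by c^*, and
   translation invariance of Q carries the two identities along W. *)

lemma sign_changes_ge_2I:
  assumes "x < y" "y < z" "f x * f y < 0" "f y * f z < 0"
  shows "sign_changes_ge f 2"
  unfolding sign_changes_ge_def
  by (rule exI[of _ "[x, y, z]"]) (use assms in \<open>auto simp: numeral_2_eq_2 less_Suc_eq\<close>)

lemma ex_pos_if_integral_indicator_pos:
  fixes f :: "real \<Rightarrow> real"
  assumes "0 < (\<integral>s. indicator {x<..<y} s * f s \<partial>lborel)"
  shows "\<exists>s\<in>{x<..<y}. 0 < f s"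
proof (rule ccontr)
  assume "\<not> ?thesis"
  then have "0 \<le> (\<integral>s. - (indicator {x<..<y} s * f s) \<partial>lborel)"
    by (intro Bochner_Integration.integral_nonneg) (auto simp: indicator_def not_less)
  with assms show False by simp
qed

lemma
  fixes Q :: "real \<Rightarrow> real"
  assumes cont: "continuous_on UNIV Q"
    and lim_bot: "(Q \<longlongrightarrow> lb) at_bot" and lim_top: "(Q \<longlongrightarrow> lt) at_top"
    and "lt < c" "c < lb"
  shows Q_Sup_level_set: "Q (Sup {x. Q x = c}) = c"
    and less_if_Sup_level_set_less: "Sup {x. Q x = c} < x \<Longrightarrow> Q x < c"
proof -
  define L where "L = {x. Q x = c}"
  obtain N where N: "\<And>t. N \<le> t \<Longrightarrow> Q t < c"
    using order_tendstoD(2)[OF lim_top \<open>lt < c\<close>] by (auto simp: eventually_at_top_linorder)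
  obtain M where M: "c < Q M"
    using order_tendstoD(1)[OF lim_bot \<open>c < lb\<close>] by (auto simp: eventually_at_bot_linorder)
  have crossing: "\<exists>y\<ge>x. Q y = c" if "c \<le> Q x" for x
  proof -
    have "Q (max x N) \<le> c"
      using N[of "max x N"] by simp
    then show ?thesis
      using IVT2'[OF _ that max.cobounded1 continuous_on_subset[OF cont subset_UNIV]] by blast
  qed
  have "L \<noteq> {}"
    using crossing[of M] M by (auto simp: L_def)
  moreover have bdd: "bdd_above L"
  proof (rule bdd_aboveI)
    fix y assume "y \<in> L"
    then show "y \<le> N" using N[of y] by (cases "N \<le> y") (auto simp: L_def)
  qed
  moreover have "closed L"
    unfolding L_def by (intro closed_Collect_eq cont continuous_on_const)
  ultimately have "Sup L \<in> L"
    by (rule closed_contains_Sup)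
  then show "Q (Sup {x. Q x = c}) = c"
    by (simp add: L_def)
  show "Q x < c" if "Sup {x. Q x = c} < x"
    using crossing[of x] cSup_upper[OF _ bdd] that by (force simp: L_def)
qed

text \<open>If Q ran from above c down to below c, back up to c and down again, its rate of
  decrease f would be positive, negative and positive in turn.\<close>
lemma ge_iff_le_Sup_level_set:
  fixes Q f :: "real \<Rightarrow> real"
  assumes cont: "continuous_on UNIV Q"
    and lim_bot: "(Q \<longlongrightarrow> lb) at_bot" and lim_top: "(Q \<longlongrightarrow> lt) at_top"
    and "lt < c" "c < lb"
    and decrease: "\<And>x y. x \<le> y \<Longrightarrow> Q x - Q y = (\<integral>s. indicator {x<..<y} s * f s \<partial>lborel)"
    and few: "fewer_sign_changes f 2"
  shows "c \<le> Q x \<longleftrightarrow> x \<le> Sup {x. Q x = c}"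
proof -
  define S where "S = Sup {x. Q x = c}"
  note Q_S = Q_Sup_level_set[OF assms(1-5), folded S_def]
  note above = less_if_Sup_level_set_less[OF assms(1-5), folded S_def]
  have pos_witness: "\<exists>s\<in>{x<..<y}. 0 < f s" if "x \<le> y" "Q y < Q x" for x y
    using that by (intro ex_pos_if_integral_indicator_pos) (simp add: decrease[symmetric])
  have neg_witness: "\<exists>s\<in>{x<..<y}. f s < 0" if "x \<le> y" "Q x < Q y" for x y
    using ex_pos_if_integral_indicator_pos[of x y "\<lambda>s. - f s"] decrease[of x y] that by simp
  have below: "c \<le> Q x" if x_less: "x < S" for x
  proof (rule ccontr)
    assume "\<not> c \<le> Q x"
    obtain M where "\<And>t. t \<le> M \<Longrightarrow> c < Q t"
      using order_tendstoD(1)[OF lim_bot \<open>c < lb\<close>] by (auto simp: eventually_at_bot_linorder)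
    then have "min M x \<le> x" "c < Q (min M x)"
      by simp_all
    then obtain s1 where "s1 < x" "0 < f s1"
      using pos_witness[of "min M x" x] \<open>\<not> c \<le> Q x\<close> by auto
    moreover obtain s2 where "x < s2" "s2 < S" "f s2 < 0"
      using neg_witness[of x S] x_less Q_S \<open>\<not> c \<le> Q x\<close> by force
    moreover obtain s3 where "S < s3" "0 < f s3"
      using pos_witness[of S "S + 1"] above[of "S + 1"] Q_S by auto
    ultimately have "sign_changes_ge f 2"
      by (intro sign_changes_ge_2I[of s1 s2 s3]) (auto simp: mult_pos_neg mult_neg_pos)
    with few show False by (simp add: fewer_sign_changes_def)
  qed
  show ?thesis
    using above[of x] below[of x] Q_S unfolding S_def[symmetric]
    by (cases x S rule: linorder_cases) auto
qed

lemma antimono_ge_iff_le_Sup: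
  fixes F :: "real \<Rightarrow> real"
  assumes mono: "antimono F" and cont: "continuous_on UNIV F"
    and lim_bot: "(F \<longlongrightarrow> lb) at_bot" and lim_top: "(F \<longlongrightarrow> lt) at_top"
    and "lt < c" "c < lb"
  shows "c \<le> F y \<longleftrightarrow> y \<le> Sup {y. c \<le> F y}"
proof -
  define D where "D = {y. c \<le> F y}"
  obtain N where N: "\<And>t. N \<le> t \<Longrightarrow> F t < c"
    using order_tendstoD(2)[OF lim_top \<open>lt < c\<close>] by (auto simp: eventually_at_top_linorder)
  obtain M where M: "\<And>t. t \<le> M \<Longrightarrow> c < F t"
    using order_tendstoD(1)[OF lim_bot \<open>c < lb\<close>] by (auto simp: eventually_at_bot_linorder)
  have "D \<noteq> {}"
    using M[of M] by (auto simp: D_def intro: less_imp_le)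
  moreover have bdd: "bdd_above D"
  proof (rule bdd_aboveI)
    fix y assume "y \<in> D"
    then show "y \<le> N" using N[of y] by (cases "N \<le> y") (auto simp: D_def)
  qed
  moreover have "closed D"
    unfolding D_def by (intro closed_Collect_le cont continuous_on_const)
  ultimately have "Sup D \<in> D"
    by (rule closed_contains_Sup)
  then show ?thesis
    using cSup_upper[OF _ bdd, of y] antimonoD[OF mono, of y "Sup D"] unfolding D_def by auto
qed

lemma antimono_gt_iff_less_Sup:
  fixes F :: "real \<Rightarrow> real"
  assumes mono: "antimono F" and cont: "continuous_on UNIV F"
    and lim_bot: "(F \<longlongrightarrow> lb) at_bot" and lim_top: "(F \<longlongrightarrow> lt) at_top"
    and "lt < c" "c < lb"
  shows "c < F y \<longleftrightarrow> y < Sup {y. c < F y}"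
proof -
  define D where "D = {y. c < F y}"
  obtain N where N: "\<And>t. N \<le> t \<Longrightarrow> F t < c"
    using order_tendstoD(2)[OF lim_top \<open>lt < c\<close>] by (auto simp: eventually_at_top_linorder)
  obtain M where M: "\<And>t. t \<le> M \<Longrightarrow> c < F t"
    using order_tendstoD(1)[OF lim_bot \<open>c < lb\<close>] by (auto simp: eventually_at_bot_linorder)
  have ne: "D \<noteq> {}"
    using M[of M] by (auto simp: D_def)
  have le_N: "y \<le> N" if "y \<in> D" for y
    using that N[of y] by (cases "N \<le> y") (auto simp: D_def)
  then have bdd: "bdd_above D"
    by (rule bdd_aboveI)
  have "Sup D \<notin> D"
  proof (rule Sup_notin_open)
    show "open D"
      unfolding D_def by (intro open_Collect_less cont continuous_on_const)
    show "\<forall>y\<in>D. y < N + 1"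
      using le_N by fastforce
  qed
  show ?thesis
    unfolding D_def[symmetric]
  proof
    assume "c < F y"
    then have "y \<in> D"
      by (simp add: D_def)
    with \<open>Sup D \<notin> D\<close> show "y < Sup D"
      using cSup_upper[OF _ bdd, of y] by (cases "y = Sup D") auto
  next
    assume "y < Sup D"
    then obtain y' where "y' \<in> D" "y < y'"
      using less_cSup_iff[OF ne bdd] by blast
    then show "c < F y"
      using antimonoD[OF mono, of y y'] by (auto simp: D_def)
  qed
qed

lemma Qop_translate: "Qop k G (\<lambda>y. u (y - d)) x = Qop k G u (x - d)"
  unfolding Qop_def
  by (subst lborel_integral_real_affine[where c=1 and t=d]) (simp_all add: algebra_simps)

definition tail :: "(real \<Rightarrow> real) \<Rightarrow> real \<Rightarrow> real" where
  "tail k t = (\<integral>s. indicator {t..} s * k s \<partial>lborel)"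

lemma tail_eq_convolution_atMost: "(\<integral>y. k (x - y) * indicator {..c} y \<partial>lborel) = tail k (x - c)"
  unfolding tail_def
  by (subst lborel_integral_real_affine[where c="-1" and t=x])
    (auto simp: indicator_def intro!: Bochner_Integration.integral_cong)

locale probability_density =
  fixes k :: "real \<Rightarrow> real"
  assumes nonneg: "\<And>x. 0 \<le> k x"
    and integrable: "integrable lborel k"
    and integral_eq_1: "integral\<^sup>L lborel k = 1"
begin

lemma borel_measurable_density[measurable]: "k \<in> borel_measurable borel"
  using borel_measurable_integrable[OF integrable] by simp

lemma integrable_indicator: "A \<in> sets borel \<Longrightarrow> integrable lborel (\<lambda>s. indicator A s * k s)"
  using integrable_mult_indicator[OF _ integrable] by simp

lemma integrable_translate_indicator:
  "A \<in> sets borel \<Longrightarrow> integrable lborel (\<lambda>s. indicator A s * k (s - c))"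
  using integrable_mult_indicator[OF _ lborel_integrable_real_affine[OF integrable, of 1 "-c"]]
  by simp

lemma integrable_reflect_indicator:
  "A \<in> sets borel \<Longrightarrow> integrable lborel (\<lambda>y. k (x - y) * indicator A y)"
  using integrable_mult_indicator[OF _ lborel_integrable_real_affine[OF integrable, of "-1" x]]
  by (simp add: mult.commute)

lemma tail_nonneg: "0 \<le> tail k t"
  unfolding tail_def by (rule Bochner_Integration.integral_nonneg) (simp add: nonneg)

lemma tail_le_1: "tail k t \<le> 1"
proof -
  have "tail k t \<le> integral\<^sup>L lborel k"
    unfolding tail_def
    by (rule integral_mono[OF integrable_indicator integrable]) (auto simp: nonneg indicator_def)
  then show ?thesis
    using integral_eq_1 by simp
qed

lemma tail_greaterThan: "tail k t = (\<integral>s. indicator {t<..} s * k s \<partial>lborel)"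
  unfolding tail_def
  by (rule integral_cong_AE) (auto intro!: eventually_mono[OF AE_lborel_singleton[of t]] simp: indicator_def)

lemma tail_eq_convolution_lessThan: "(\<integral>y. k (x - y) * indicator {..<c} y \<partial>lborel) = tail k (x - c)"
  unfolding tail_greaterThan
  by (subst lborel_integral_real_affine[where c="-1" and t=x])
    (auto simp: indicator_def intro!: Bochner_Integration.integral_cong)

lemma tail_diff:
  assumes "x \<le> y"
  shows "tail k x - tail k y = (\<integral>s. indicator {x<..<y} s * k s \<partial>lborel)"
proof (cases "x = y")
  case False
  have "tail k x = (\<integral>s. indicator {x<..<y} s * k s + indicator {y..} s * k s \<partial>lborel)"
    unfolding tail_greaterThan using assms False
    by (intro Bochner_Integration.integral_cong) (auto simp: indicator_def)
  also have "\<dots> = (\<integral>s. indicator {x<..<y} s * k s \<partial>lborel) + tail k y"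
    unfolding tail_def by (rule Bochner_Integration.integral_add) (auto intro: integrable_indicator)
  finally show ?thesis by simp
qed simp

lemma tail_diff_translate:
  assumes "x \<le> y"
  shows "tail k (x - c) - tail k (y - c) = (\<integral>s. indicator {x<..<y} s * k (s - c) \<partial>lborel)"
  unfolding tail_diff[of "x - c" "y - c", OF diff_right_mono[OF assms]]
  by (subst lborel_integral_real_affine[where c=1 and t="-c"])
    (auto simp: indicator_def intro!: Bochner_Integration.integral_cong)

lemma antimono_tail: "antimono (tail k)"
proof (rule antimonoI)
  fix x y :: real assume "x \<le> y"
  moreover have "0 \<le> (\<integral>s. indicator {x<..<y} s * k s \<partial>lborel)"
    by (rule Bochner_Integration.integral_nonneg) (simp add: nonneg)
  ultimately show "tail k y \<le> tail k x"
    using tail_diff by fastforce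
qed

lemma continuous_tail: "continuous_on UNIV (tail k)"
proof (intro continuous_at_imp_continuous_on ballI continuous_at_sequentiallyI)
  fix t and u :: "nat \<Rightarrow> real" assume u: "u \<longlonglongrightarrow> t"
  have "(\<lambda>n. indicator {u n..} s * k s) \<longlonglongrightarrow> indicator {t..} s * k s" if "s \<noteq> t" for s
  proof -
    have "\<forall>\<^sub>F n in sequentially. indicator {u n..} s * k s = indicator {t..} s * k s"
    proof (cases "s < t")
      case True
      show ?thesis
        using order_tendstoD(1)[OF u True] by eventually_elim (use True in \<open>auto simp: indicator_def\<close>)
    next
      case False
      with that have "t < s" by simp
      show ?thesis
        using order_tendstoD(2)[OF u \<open>t < s\<close>]
        by eventually_elim (use \<open>t < s\<close> in \<open>auto simp: indicator_def\<close>)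
    qed
    then show ?thesis
      by (rule tendsto_eventually)
  qed
  then show "(\<lambda>n. tail k (u n)) \<longlonglongrightarrow> tail k t"
    unfolding tail_def
    by (intro integral_dominated_convergence[where w=k] eventually_mono[OF AE_lborel_singleton[of t]])
      (auto simp: integrable nonneg indicator_def)
qed

lemma tail_at_top: "(tail k \<longlongrightarrow> 0) at_top"
proof -
  have "((\<lambda>t. tail k t) \<longlongrightarrow> (\<integral>s. 0 \<partial>(lborel :: real measure))) at_top"
    unfolding tail_def
  proof (rule integral_dominated_convergence_at_top[where w=k and f="\<lambda>s. 0"
        and s="\<lambda>t s. indicator {t..} s * k s"])
    show "AE s in lborel. ((\<lambda>t. indicator {t..} s * k s) \<longlongrightarrow> 0) at_top"
    proof (rule AE_I2)
      fix s
      show "((\<lambda>t. indicator {t..} s * k s) \<longlongrightarrow> 0) at_top"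
        by (rule tendsto_eventually, rule eventually_mono[OF eventually_gt_at_top[of s]])
          (simp add: indicator_def)
    qed
  qed (auto simp: integrable nonneg indicator_def)
  then show ?thesis
    by simp
qed

lemma tail_at_bot: "(tail k \<longlongrightarrow> 1) at_bot"
  unfolding filterlim_at_bot_mirror
proof -
  have "((\<lambda>t. tail k (- t)) \<longlongrightarrow> integral\<^sup>L lborel k) at_top"
    unfolding tail_def
  proof (rule integral_dominated_convergence_at_top[where w=k and f=k
        and s="\<lambda>t s. indicator {- t..} s * k s"])
    show "AE s in lborel. ((\<lambda>t. indicator {- t..} s * k s) \<longlongrightarrow> k s) at_top"
    proof (rule AE_I2)
      fix s
      show "((\<lambda>t. indicator {- t..} s * k s) \<longlongrightarrow> k s) at_top"
        by (rule tendsto_eventually, rule eventually_mono[OF eventually_gt_at_top[of "- s"]])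
          (simp add: indicator_def)
    qed
  qed (auto simp: integrable nonneg indicator_def)
  then show "((\<lambda>t. tail k (- t)) \<longlongrightarrow> 1) at_top"
    by (simp add: integral_eq_1)
qed

lemma ex_tail_eq:
  assumes "0 < c" "c < 1"
  obtains y where "tail k y = c"
proof -
  obtain N where N: "tail k N < c"
    using order_tendstoD(2)[OF tail_at_top \<open>0 < c\<close>] by (auto simp: eventually_at_top_linorder)
  obtain M where M: "c < tail k M"
    using order_tendstoD(1)[OF tail_at_bot \<open>c < 1\<close>] by (auto simp: eventually_at_bot_linorder)
  have "c \<le> tail k (min M N)"
    using M antimonoD[OF antimono_tail, of "min M N" M] by simp
  moreover have "continuous_on {min M N..N} (tail k)"
    by (rule continuous_on_subset[OF continuous_tail]) simp
  ultimately show ?thesis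
    using IVT2'[where f="tail k", OF less_imp_le[OF N] _ min.cobounded2] that by blast
qed

lemma continuous_on_tail[continuous_intros]:
  "continuous_on S f \<Longrightarrow> continuous_on S (\<lambda>x. tail k (f x))"
  by (rule continuous_on_compose2[OF continuous_tail]) auto

lemma tail_translate_at_top: "((\<lambda>x. tail k (x - c)) \<longlongrightarrow> 0) at_top"
proof (rule filterlim_compose[OF tail_at_top])
  show "filterlim (\<lambda>x. x - c) at_top at_top"
    unfolding filterlim_at_top
  proof
    fix z
    show "\<forall>\<^sub>F x in at_top. z \<le> x - c"
      using eventually_ge_at_top[of "z + c"] by eventually_elim simp
  qed
qed

lemma tail_translate_at_bot: "((\<lambda>x. tail k (x - c)) \<longlongrightarrow> 1) at_bot"
proof (rule filterlim_compose[OF tail_at_bot])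
  show "filterlim (\<lambda>x. x - c) at_bot at_bot"
    unfolding filterlim_at_bot
  proof
    fix z
    show "\<forall>\<^sub>F x in at_bot. x - c \<le> z"
      using eventually_le_at_bot[of "z + c"] by eventually_elim simp
  qed
qed

lemma gfun_tail_eq_indicators:
  assumes "0 < a" "a < b" "b < 1"
  obtains A B where "B < A"
    and "\<And>y. gfun a m b (tail k y) = indicator {..A} y - (1 - m) * indicator {..<B} y"
proof -
  define A where "A = Sup {y. a \<le> tail k y}"
  define B where "B = Sup {y. b < tail k y}"
  have A: "a \<le> tail k y \<longleftrightarrow> y \<le> A" for y
    unfolding A_def using assms
    by (intro antimono_ge_iff_le_Sup[OF antimono_tail continuous_tail tail_at_bot tail_at_top]) auto
  have B: "b < tail k y \<longleftrightarrow> y < B" for y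
    unfolding B_def using assms
    by (intro antimono_gt_iff_less_Sup[OF antimono_tail continuous_tail tail_at_bot tail_at_top]) auto
  obtain ya yb where ya: "tail k ya = a" and yb: "tail k yb = b"
    using ex_tail_eq assms by (metis less_trans)
  have "yb < ya"
    using antimonoD[OF antimono_tail, of ya yb] ya yb \<open>a < b\<close> by (cases "ya \<le> yb") auto
  moreover have "B \<le> yb" "ya \<le> A"
    using A[of ya] B[of yb] ya yb by auto
  ultimately have "B < A"
    by linarith
  moreover have "gfun a m b (tail k y) = indicator {..A} y - (1 - m) * indicator {..<B} y" for y
    using A[of y] B[of y] \<open>B < A\<close> \<open>a < b\<close> by (auto simp: gfun_def indicator_def)
  ultimately show ?thesis
    using that by blast
qed

lemma Qop_gfun_tail:
  assumes "0 < a" "a < b" "b < 1"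
  obtains A B where "B < A"
    and "\<And>x. Qop k (gfun a m b) (tail k) x = tail k (x - A) - (1 - m) * tail k (x - B)"
proof -
  obtain A B where "B < A"
    and g: "\<And>y. gfun a m b (tail k y) = indicator {..A} y - (1 - m) * indicator {..<B} y"
    using gfun_tail_eq_indicators assms by blast
  have "Qop k (gfun a m b) (tail k) x = tail k (x - A) - (1 - m) * tail k (x - B)" for x
  proof -
    have "Qop k (gfun a m b) (tail k) x =
      (\<integral>y. k (x - y) * indicator {..A} y - (1 - m) * (k (x - y) * indicator {..<B} y) \<partial>lborel)"
      unfolding Qop_def g by (simp add: algebra_simps)
    also have "\<dots> = (\<integral>y. k (x - y) * indicator {..A} y \<partial>lborel)
        - (1 - m) * (\<integral>y. k (x - y) * indicator {..<B} y \<partial>lborel)"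
      by (simp add: integrable_reflect_indicator)
    also have "\<dots> = tail k (x - A) - (1 - m) * tail k (x - B)"
      by (simp add: tail_eq_convolution_atMost tail_eq_convolution_lessThan)
    finally show ?thesis .
  qed
  with \<open>B < A\<close> show ?thesis
    using that by blast
qed

lemma abs_Qop_gfun_tail_le_1:
  assumes "0 < a" "a < b" "b < 1" "0 \<le> m" "m \<le> 1"
  shows "\<bar>Qop k (gfun a m b) (tail k) x\<bar> \<le> 1"
proof -
  obtain A B where Q: "Qop k (gfun a m b) (tail k) x = tail k (x - A) - (1 - m) * tail k (x - B)"
    using Qop_gfun_tail assms(1-3) by metis
  have "0 \<le> (1 - m) * tail k (x - B)" "(1 - m) * tail k (x - B) \<le> 1"
    using assms(4,5) tail_nonneg tail_le_1 by (simp_all add: mult_le_one)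
  then show ?thesis
    unfolding Q using tail_nonneg[of "x - A"] tail_le_1[of "x - A"] by (simp add: abs_le_iff)
qed

lemma Qop_gfun_tail_ge_iff:
  assumes "0 < a" "a < m" "a < b" "b < 1"
    and sign: "\<And>A B. B < A \<Longrightarrow> fewer_sign_changes (\<lambda>x. k (x - A) - (1 - m) * k (x - B)) 2"
  shows "a \<le> Qop k (gfun a m b) (tail k) x \<longleftrightarrow> x \<le> Sup {x. Qop k (gfun a m b) (tail k) x = a}"
proof -
  obtain A B where "B < A"
    and Q: "\<And>x. Qop k (gfun a m b) (tail k) x = tail k (x - A) - (1 - m) * tail k (x - B)"
    using Qop_gfun_tail assms(1,3,4) by blast
  show ?thesis
    unfolding Q
  proof (rule ge_iff_le_Sup_level_set[where f="\<lambda>s. k (s - A) - (1 - m) * k (s - B)"])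
    show "continuous_on UNIV (\<lambda>x. tail k (x - A) - (1 - m) * tail k (x - B))"
      by (intro continuous_intros)
    show "((\<lambda>x. tail k (x - A) - (1 - m) * tail k (x - B)) \<longlongrightarrow> 1 - (1 - m) * 1) at_bot"
      by (intro tendsto_intros tail_translate_at_bot)
    show "((\<lambda>x. tail k (x - A) - (1 - m) * tail k (x - B)) \<longlongrightarrow> 0 - (1 - m) * 0) at_top"
      by (intro tendsto_intros tail_translate_at_top)
    show "(tail k (x - A) - (1 - m) * tail k (x - B)) - (tail k (y - A) - (1 - m) * tail k (y - B))
      = (\<integral>s. indicator {x<..<y} s * (k (s - A) - (1 - m) * k (s - B)) \<partial>lborel)" if "x \<le> y" for x y
    proof -
      have "(tail k (x - A) - (1 - m) * tail k (x - B)) - (tail k (y - A) - (1 - m) * tail k (y - B))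
          = (tail k (x - A) - tail k (y - A)) - (1 - m) * (tail k (x - B) - tail k (y - B))"
        by (simp add: algebra_simps)
      also have "\<dots> = (\<integral>s. indicator {x<..<y} s * k (s - A) \<partial>lborel)
          - (1 - m) * (\<integral>s. indicator {x<..<y} s * k (s - B) \<partial>lborel)"
        using that by (simp add: tail_diff_translate)
      also have "\<dots> = (\<integral>s. indicator {x<..<y} s * k (s - A)
          - (1 - m) * (indicator {x<..<y} s * k (s - B)) \<partial>lborel)"
        by (simp add: integrable_translate_indicator)
      finally show ?thesis
        by (simp add: algebra_simps)
    qed
    show "fewer_sign_changes (\<lambda>s. k (s - A) - (1 - m) * k (s - B)) 2"
      using sign[OF \<open>B < A\<close>] .
  qed (use assms in auto)
qed

end

lemma Qop_eq_tail_if_step: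
  assumes "\<And>y. G (u y) = indicator {..c} y"
  shows "Qop k G u x = tail k (x - c)"
  unfolding Qop_def assms by (rule tail_eq_convolution_atMost)

lemma Qop_alternating_translates:
  assumes w2: "\<And>x. Qop k G w1 (x + c) = w2 x" and w1: "\<And>x. Qop k G w2 x = w1 (x - c)"
  defines "W \<equiv> \<lambda>n x. if even n then w1 (x - real n * c) else w2 (x - real n * c)"
  shows "Qop k G (W n) = W (Suc n)"
proof
  fix x
  have shift: "x - real n * c = x - real (Suc n) * c + c"
    by (simp add: algebra_simps)
  show "Qop k G (W n) x = W (Suc n) x"
  proof (cases "even n")
    case True
    then have "Qop k G (W n) x = Qop k G w1 (x - real n * c)"
      by (simp add: W_def Qop_translate)
    also have "\<dots> = w2 (x - real (Suc n) * c)"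
      unfolding shift by (rule w2)
    finally show ?thesis
      using True by (simp add: W_def)
  next
    case False
    then have "Qop k G (W n) x = Qop k G w2 (x - real n * c)"
      by (simp add: W_def Qop_translate)
    also have "\<dots> = w1 (x - real (Suc n) * c)"
      unfolding shift w1 by simp
    finally show ?thesis
      using False by (simp add: W_def)
  qed
qed

theorem theorem1:
  fixes a m b :: real and k :: "real \<Rightarrow> real"
    and w1 w2 :: "real \<Rightarrow> real" and cstar :: real and W :: "nat \<Rightarrow> real \<Rightarrow> real"
  assumes abm: "0 < a" "a < m" "m < b" "b < 1"
    and pd: "piecewise_differentiable k"
    and H1: "\<forall>x. k x \<ge> 0" "integrable lborel k" "integral\<^sup>L lborel k = 1"
    and H2: "\<forall>x. k x = k (- x)"
    and H3: "\<exists>\<sigma>::ereal. 0 < \<sigma> \<and> (\<forall>x. ereal \<bar>x\<bar> < \<sigma> \<longrightarrow> k x > 0)"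
    and H4: "\<forall>l A B. 0 < l \<and> l < 1 \<and> A > B \<longrightarrow>
               fewer_sign_changes (\<lambda>x. k (x - A) - l * k (x - B)) 2"
    and H5: "\<forall>l A B. 0 < l \<and> l < 1 \<and> A > B \<longrightarrow>
               (\<forall>\<^sub>F r in at_top. fewer_sign_changes
                  (\<lambda>x. k (x - r - A) - l * k (x - r - B) - k (x + r + A) + l * k (x + r + B)) 4)"
    and w1_def: "w1 = (\<lambda>x. set_lebesgue_integral lborel {x..} k)"
    and c_def: "cstar = Sup {x. Qop k (gfun a m b) w1 x = a} / 2"
    and w2_def: "w2 = (\<lambda>x. Qop k (gfun a m b) w1 (x + cstar))"
    and W_def: "W = (\<lambda>n x. if even n then w1 (x - real n * cstar) else w2 (x - real n * cstar))"
    and small: "(SUP x. \<bar>w2 x\<bar>) < b"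
  shows "\<forall>n. W (Suc n) = Qop k (gfun a m b) (W n)"
proof -
  interpret probability_density k
    using H1 by unfold_locales auto
  have w1_tail: "w1 = tail k"
    by (simp add: w1_def tail_def set_lebesgue_integral_def fun_eq_iff)
  have "fewer_sign_changes (\<lambda>x. k (x - A) - (1 - m) * k (x - B)) 2" if "B < A" for A B
    using H4 abm that by auto
  then have w1_level: "a \<le> Qop k (gfun a m b) w1 x \<longleftrightarrow> x \<le> 2 * cstar" for x
    using Qop_gfun_tail_ge_iff abm unfolding c_def w1_tail by auto
  have sup_bound: "\<bar>w2 y\<bar> \<le> (SUP x. \<bar>w2 x\<bar>)" for y
    using abs_Qop_gfun_tail_le_1 abm
    by (intro cSUP_upper bdd_aboveI2[of _ _ 1]) (auto simp: w2_def w1_tail)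
  have w2_less: "w2 y < b" for y
    using sup_bound[of y] small abs_ge_self[of "w2 y"] by linarith
  have "gfun a m b (w2 y) = indicator {..cstar} y" for y
    using w1_level[of "y + cstar"] w2_less[of y] by (auto simp: w2_def gfun_def indicator_def)
  then have "Qop k (gfun a m b) w2 x = w1 (x - cstar)" for x
    unfolding w1_tail by (rule Qop_eq_tail_if_step)
  then show ?thesis
    using Qop_alternating_translates[of k "gfun a m b" w1 cstar w2] by (simp add: w2_def W_def)
qed

end
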